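(* Let $\|\cdot\|$ be any norm on $\mathbb{R}^d$, let $m\geq 2$, and let $M$ be a non-empty finite set of $m$-gons in $\mathbb{R}^d$. Let $\mathcal{H}(M)$ be the hypergraph with vertex set $\mathbb{R}^d$ and edge set $\{X\subseteq\mathbb{R}^d\mid X \text{ is congruent in } (\mathbb{R}^d,\|\cdot\|) \text{ to some } T\in M\}$. Then there exists a finite set $S$ of $(m+1)$-gons in $\mathbb{R}^d$ such that $\mathcal{H}(M)$ is equivalent to the $(m+1)$-uniform hypergraph $\mathcal{H}(S)$ with vertex set $\mathbb{R}^d$ and edge set $\{Y\subseteq\mathbb{R}^d\mid Y\text{ is congruent in } (\mathbb{R}^d,\|\cdot\|) \text{ to some element of } S\}$.
   Context: Two sets $X,Y\subseteq\mathbb{R}^d$ are congruent in $(\mathbb{R}^d,\|\cdot\|)$ iff one is the image of the other under a composition, in either order, of a surjective linear isometry of $(\mathbb{R}^d,\|\cdot\|)$ and a translation. An $m$-gon is any subset of $\mathbb{R}^d$ of cardinality exactly $m$. A hypergraph is $(V,E)$ with edges subsets of $V$ of size at least $2$; a proper coloring $\varphi:V\to C$ makes no edge monochromatic; $\chi$ is the least $|C|$ admitting a proper coloring. Two hypergraphs $\mathcal{H},\mathcal{G}$ on the same vertex set are equivalent if $\chi(\mathcal{H})=\chi(\mathcal{G})$ and, for every set $C$ of that cardinality, a map into $C$ is a proper coloring of $\mathcal{H}$ iff it is a proper coloring of $\mathcal{G}$. *)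

theory Defs
  imports "HOL-Analysis.Analysis"
begin

definition is_norm :: "('a::real_vector \<Rightarrow> real) \<Rightarrow> bool" where
  "is_norm N \<longleftrightarrow> (\<forall>x. N x = 0 \<longleftrightarrow> x = 0) \<and> (\<forall>x y. N (x + y) \<le> N x + N y)
     \<and> (\<forall>c x. N (c *\<^sub>R x) = \<bar>c\<bar> * N x)"

definition lin_isometry :: "('a::real_vector \<Rightarrow> real) \<Rightarrow> ('a \<Rightarrow> 'a) \<Rightarrow> bool" where
  "lin_isometry N L \<longleftrightarrow> linear L \<and> surj L \<and> (\<forall>x. N (L x) = N x)"

definition congruent_in :: "('a::real_vector \<Rightarrow> real) \<Rightarrow> 'a set \<Rightarrow> 'a set \<Rightarrow> bool" where
  "congruent_in N X Y \<longleftrightarrow> (\<exists>L t. lin_isometry N L \<and>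
      (Y = (\<lambda>x. L x + t) ` X \<or> Y = (\<lambda>x. L (x + t)) ` X \<or>
       X = (\<lambda>x. L x + t) ` Y \<or> X = (\<lambda>x. L (x + t)) ` Y))"

definition is_gon :: "nat \<Rightarrow> 'a set \<Rightarrow> bool" where
  "is_gon m X \<longleftrightarrow> finite X \<and> card X = m"

definition cong_edges :: "('a::real_vector \<Rightarrow> real) \<Rightarrow> 'a set set \<Rightarrow> 'a set set" where
  "cong_edges N M = {X. \<exists>T\<in>M. congruent_in N X T}"

definition hypergraph :: "'v set \<Rightarrow> 'v set set \<Rightarrow> bool" where
  "hypergraph V E \<longleftrightarrow> (\<forall>e\<in>E. e \<subseteq> V \<and> \<not> (finite e \<and> card e < 2))"

definition proper_coloring :: "'v set \<Rightarrow> 'v set set \<Rightarrow> 'c set \<Rightarrow> ('v \<Rightarrow> 'c) \<Rightarrow> bool" where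
  "proper_coloring V E C \<phi> \<longleftrightarrow> (\<forall>v\<in>V. \<phi> v \<in> C) \<and> (\<forall>e\<in>E. \<exists>x\<in>e. \<exists>y\<in>e. \<phi> x \<noteq> \<phi> y)"

definition colorable_with :: "'v set \<Rightarrow> 'v set set \<Rightarrow> 'c set \<Rightarrow> bool" where
  "colorable_with V E C \<longleftrightarrow> (\<exists>\<phi>. proper_coloring V E C \<phi>)"

text \<open>Competitor colour sets range over subsets of the vertex type; this suffices
  since any proper colouring uses at most |V| colours.\<close>
definition has_chromatic_card :: "'v set \<Rightarrow> 'v set set \<Rightarrow> 'c set \<Rightarrow> bool" where
  "has_chromatic_card V E C \<longleftrightarrow> colorable_with V E C \<and>
     (\<forall>D::'v set. colorable_with V E D \<longrightarrow> (card_of C, card_of D) \<in> ordLeq)"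

text \<open>Colour sets are
  taken as sets of the vertex type: every colour set of cardinality chi (which is
  at most |V|) is in bijection with such a set, and properness is invariant
  under renaming colours.\<close>
definition hg_equivalent :: "'v set \<Rightarrow> 'v set set \<Rightarrow> 'v set set \<Rightarrow> bool" where
  "hg_equivalent V E1 E2 \<longleftrightarrow>
     (\<forall>D::'v set. has_chromatic_card V E1 D \<longleftrightarrow> has_chromatic_card V E2 D) \<and>
     (\<forall>(C::'v set) (\<phi>::'v \<Rightarrow> 'v). has_chromatic_card V E1 C \<longrightarrow>
          (proper_coloring V E1 C \<phi> \<longleftrightarrow> proper_coloring V E2 C \<phi>))"

end

theory Submission
  imports Defs
begin

text \<open>Let \<open>\<chi>\<close> be the chromatic number of \<open>\<H>(M)\<close>, which is finite because a fine grid
  coloring with a large period separates all points at the finitely many distances occurring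
  inside the polygons of \<open>M\<close>. By compactness some finite set \<open>A\<close> is not \<open>(\<chi> - 1)\<close>-colorable
  in \<open>\<H>(M)\<close>. Let \<open>G\<close> be the union of the polygons of \<open>M\<close> and of \<open>\<chi>\<close> pairwise disjoint
  translates of \<open>A\<close>, and let \<open>S\<close> consist of the sets obtained by adding one point of \<open>G\<close>
  to an edge of \<open>\<H>(M)\<close> inside \<open>G\<close>. Every edge of \<open>\<H>(S)\<close> contains an edge of \<open>\<H>(M)\<close>.
  Conversely, let a coloring with at most \<open>\<chi>\<close> colors be proper for \<open>\<H>(S)\<close> and make some
  congruent copy \<open>g(T)\<close>, \<open>T \<in> M\<close>, monochromatic. Pulled back along \<open>g\<close>, a monochromatic edge
  inside \<open>G\<close> shares its color with no other point of \<open>G\<close>. So every translate of \<open>A\<close> misses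
  the color of \<open>T\<close>, hence contains a monochromatic edge, whose color is again private: that
  makes \<open>\<chi> + 1\<close> colors.\<close>

section \<open>Norms on Euclidean space\<close>

lemma is_norm_eq_0: "is_norm N \<Longrightarrow> N x = 0 \<longleftrightarrow> x = 0"
  unfolding is_norm_def by blast

lemma is_norm_triangle: "is_norm N \<Longrightarrow> N (x + y) \<le> N x + N y"
  unfolding is_norm_def by blast

lemma is_norm_scaleR: "is_norm N \<Longrightarrow> N (c *\<^sub>R x) = \<bar>c\<bar> * N x"
  unfolding is_norm_def by blast

lemma is_norm_minus_commute: "is_norm N \<Longrightarrow> N (x - y) = N (y - x)"
  using is_norm_scaleR[of N "-1" "x - y"] by simp

lemma is_norm_nonneg:
  assumes "is_norm N" shows "0 \<le> N x"
  using is_norm_triangle[OF assms, of x "-x"] is_norm_scaleR[OF assms, of "-1" x]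
    is_norm_eq_0[OF assms, of 0] by simp

lemma is_norm_pos: "is_norm N \<Longrightarrow> x \<noteq> 0 \<Longrightarrow> 0 < N x"
  by (metis is_norm_eq_0 is_norm_nonneg less_eq_real_def)

lemma is_norm_sum:
  assumes "is_norm N" shows "N (sum f S) \<le> (\<Sum>i\<in>S. N (f i))"
proof (induction S rule: infinite_finite_induct)
  case (insert i S)
  then show ?case
    using is_norm_triangle[OF assms, of "f i" "sum f S"] by simp
qed (simp_all add: is_norm_eq_0[OF assms, of 0, simplified])

lemma is_norm_le_norm:
  fixes N :: "'a::euclidean_space \<Rightarrow> real"
  assumes "is_norm N"
  obtains B where "0 < B" "\<And>x. N x \<le> B * norm x"
proof
  let ?B = "1 + (\<Sum>b\<in>Basis. N b)"
  show "0 < ?B"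
    using is_norm_nonneg[OF assms] by (simp add: sum_nonneg add_pos_nonneg)
  fix x :: 'a
  have "N x = N (\<Sum>b\<in>Basis. (x \<bullet> b) *\<^sub>R b)"
    by (simp add: euclidean_representation)
  also have "\<dots> \<le> (\<Sum>b\<in>Basis. N ((x \<bullet> b) *\<^sub>R b))"
    by (rule is_norm_sum[OF assms])
  also have "\<dots> = (\<Sum>b\<in>Basis. \<bar>x \<bullet> b\<bar> * N b)"
    by (simp add: is_norm_scaleR[OF assms])
  also have "\<dots> \<le> (\<Sum>b\<in>Basis. norm x * N b)"
    by (intro sum_mono mult_right_mono Basis_le_norm is_norm_nonneg[OF assms])
  also have "\<dots> = norm x * (\<Sum>b\<in>Basis. N b)"
    by (simp add: sum_distrib_left)
  also have "\<dots> \<le> ?B * norm x"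
    by (simp add: algebra_simps)
  finally show "N x \<le> ?B * norm x" .
qed

lemma is_norm_ge_norm:
  fixes N :: "'a::euclidean_space \<Rightarrow> real"
  assumes "is_norm N"
  obtains c where "0 < c" "\<And>x. c * norm x \<le> N x"
proof -
  obtain B where "0 < B" and B: "\<And>x. N x \<le> B * norm x"
    using is_norm_le_norm[OF assms] by blast
  have "B-lipschitz_on UNIV N"
  proof (rule lipschitz_onI)
    fix x y :: 'a
    have "N x \<le> N y + N (x - y)" "N y \<le> N x + N (x - y)"
      using is_norm_triangle[OF assms, of y "x - y"] is_norm_triangle[OF assms, of x "y - x"]
        is_norm_minus_commute[OF assms, of x y] by simp_all
    then show "dist (N x) (N y) \<le> B * dist x y"
      using B[of "x - y"] by (simp add: dist_real_def dist_norm abs_le_iff)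
  qed (use \<open>0 < B\<close> in simp)
  then have "continuous_on (sphere 0 1) N"
    using lipschitz_on_continuous_on continuous_on_subset by blast
  then obtain x0 where x0: "x0 \<in> sphere (0::'a) 1" "\<And>y. y \<in> sphere 0 1 \<Longrightarrow> N x0 \<le> N y"
    using continuous_attains_inf[OF compact_sphere _ \<open>continuous_on (sphere 0 1) N\<close>] by auto
  show thesis
  proof
    show "0 < N x0"
      using x0(1) by (intro is_norm_pos[OF assms]) auto
    fix x :: 'a
    show "N x0 * norm x \<le> N x"
    proof (cases "x = 0")
      case False
      then have "N x0 \<le> N (inverse (norm x) *\<^sub>R x)"
        using x0(2) by simp
      then show ?thesis
        using False by (simp add: is_norm_scaleR[OF assms] field_simps)
    qed (simp add: is_norm_nonneg[OF assms])
  qed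
qed

section \<open>Affine isometries and congruence\<close>

lemma lin_isometry_inj:
  assumes "is_norm N" "lin_isometry N L" shows "inj L"
proof -
  have "linear L" "\<And>x. N (L x) = N x"
    using assms(2) unfolding lin_isometry_def by auto
  then show ?thesis
    unfolding linear_injective_0[OF \<open>linear L\<close>] using is_norm_eq_0[OF assms(1)] by metis
qed

lemma lin_isometry_inv:
  assumes "is_norm N" "lin_isometry N L" shows "lin_isometry N (inv L)"
proof -
  have "inj L" "linear L" "surj L" and N_L: "\<And>x. N (L x) = N x"
    using assms lin_isometry_inj unfolding lin_isometry_def by auto
  then have L_inv: "L (inv L y) = y" "inv L (L x) = x" for x y
    by (simp_all add: surj_f_inv_f)
  have "linear (inv L)"
  proof
    show "inv L (x + y) = inv L x + inv L y" for x y
      using L_inv linear_add[OF \<open>linear L\<close>] by metis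
    show "inv L (c *\<^sub>R x) = c *\<^sub>R inv L x" for c x
      using L_inv linear_scale[OF \<open>linear L\<close>] by metis
  qed
  moreover have "N (inv L x) = N x" for x
    using N_L L_inv by metis
  ultimately show ?thesis
    unfolding lin_isometry_def using inj_imp_surj_inv[OF \<open>inj L\<close>] by blast
qed

definition affine_isometry :: "('a::real_vector \<Rightarrow> real) \<Rightarrow> ('a \<Rightarrow> 'a) \<Rightarrow> bool" where
  "affine_isometry N f \<longleftrightarrow> (\<exists>L t. lin_isometry N L \<and> f = (\<lambda>x. L x + t))"

lemma affine_isometry_translation: "affine_isometry N (\<lambda>x. x + t)"
  unfolding affine_isometry_def lin_isometry_def
  by (rule exI[of _ "\<lambda>x. x"]) (auto simp: linear_id[unfolded id_def])

lemma affine_isometry_compose: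
  assumes "affine_isometry N f" "affine_isometry N g" shows "affine_isometry N (f \<circ> g)"
proof -
  obtain L t L' t' where L: "lin_isometry N L" "f = (\<lambda>x. L x + t)"
    and L': "lin_isometry N L'" "g = (\<lambda>x. L' x + t')"
    using assms unfolding affine_isometry_def by blast
  have "lin_isometry N (L \<circ> L')"
    using L(1) L'(1) linear_compose[of L' L] comp_surj[of L' L] unfolding lin_isometry_def by simp
  moreover have "f \<circ> g = (\<lambda>x. (L \<circ> L') x + (L t' + t))"
    using L L' unfolding lin_isometry_def by (auto simp: linear_add)
  ultimately show ?thesis
    unfolding affine_isometry_def by blast
qed

lemma affine_isometry_inv:
  assumes "is_norm N" "affine_isometry N f"
  shows "affine_isometry N (inv f)" "inv f \<circ> f = id"
proof -
  obtain L t where L: "lin_isometry N L" and f: "f = (\<lambda>x. L x + t)"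
    using assms(2) unfolding affine_isometry_def by blast
  let ?R = "inv L"
  have "linear ?R" "\<And>x. ?R (L x) = x" "\<And>y. L (?R y) = y"
    using lin_isometry_inv[OF assms(1) L] lin_isometry_inj[OF assms(1) L] L
    by (auto simp: lin_isometry_def surj_f_inv_f)
  then have "inv f = (\<lambda>y. ?R y + - ?R t)"
    using L unfolding f lin_isometry_def by (intro inv_equality) (auto simp: linear_add linear_diff)
  then show "affine_isometry N (inv f)"
    using lin_isometry_inv[OF assms(1) L] unfolding affine_isometry_def by blast
  show "inv f \<circ> f = id"
    using lin_isometry_inj[OF assms(1) L] unfolding f inj_def by (auto intro!: inv_o_cancel injI)
qed

lemma affine_isometry_inj: "is_norm N \<Longrightarrow> affine_isometry N f \<Longrightarrow> inj f"
  by (metis affine_isometry_inv(2) inj_on_id inj_on_imageI2)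

lemma affine_isometry_diff: "affine_isometry N f \<Longrightarrow> N (f x - f y) = N (x - y)"
  unfolding affine_isometry_def lin_isometry_def by (auto simp: linear_diff[symmetric])

lemma congruent_in_iff:
  assumes "is_norm N"
  shows "congruent_in N X Y \<longleftrightarrow> (\<exists>f. affine_isometry N f \<and> X = f ` Y)"
proof
  assume "congruent_in N X Y"
  then obtain L t where L: "lin_isometry N L" and
    images: "Y = (\<lambda>x. L x + t) ` X \<or> Y = (\<lambda>x. L (x + t)) ` X \<or>
      X = (\<lambda>x. L x + t) ` Y \<or> X = (\<lambda>x. L (x + t)) ` Y"
    unfolding congruent_in_def by blast
  have "affine_isometry N (\<lambda>x. L x + t)"
    using L unfolding affine_isometry_def by blast
  moreover have "affine_isometry N (\<lambda>x. L (x + t))"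
    unfolding affine_isometry_def
    by (rule exI[of _ L], rule exI[of _ "L t"]) (use L in \<open>auto simp: lin_isometry_def linear_add\<close>)
  ultimately obtain f where f: "affine_isometry N f" and "Y = f ` X \<or> X = f ` Y"
    using images by blast
  moreover have "inv f ` f ` X = X"
    using affine_isometry_inv(2)[OF assms f] by (simp add: image_comp)
  ultimately show "\<exists>f. affine_isometry N f \<and> X = f ` Y"
    using affine_isometry_inv(1)[OF assms f] by blast
next
  assume "\<exists>f. affine_isometry N f \<and> X = f ` Y"
  then show "congruent_in N X Y"
    unfolding affine_isometry_def congruent_in_def by blast
qed

lemma cong_edges_iff:
  "is_norm N \<Longrightarrow> X \<in> cong_edges N M \<longleftrightarrow> (\<exists>T\<in>M. \<exists>f. affine_isometry N f \<and> X = f ` T)"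
  unfolding cong_edges_def by (auto simp: congruent_in_iff)

lemma subset_cong_edges: "is_norm N \<Longrightarrow> M \<subseteq> cong_edges N M"
  using affine_isometry_translation[of N 0] by (force simp: cong_edges_iff)

lemma image_in_cong_edges:
  assumes "is_norm N" "affine_isometry N g" "X \<in> cong_edges N M"
  shows "g ` X \<in> cong_edges N M"
proof -
  obtain T f where "T \<in> M" "affine_isometry N f" "X = f ` T"
    using assms(1,3) by (auto simp: cong_edges_iff)
  moreover have "g ` X = (g \<circ> f) ` T"
    using \<open>X = f ` T\<close> by (simp add: image_comp)
  ultimately show ?thesis
    using affine_isometry_compose[OF assms(2)] cong_edges_iff[OF assms(1)] by metis
qed

lemma is_gon_cong_edges:
  assumes "is_norm N" "\<forall>T\<in>M. is_gon m T" "X \<in> cong_edges N M"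
  shows "is_gon m X"
proof -
  obtain T f where "T \<in> M" "affine_isometry N f" "X = f ` T"
    using assms(1,3) by (auto simp: cong_edges_iff)
  moreover have "inj_on f T"
    using affine_isometry_inj[OF assms(1) \<open>affine_isometry N f\<close>] by (rule inj_on_subset) simp
  ultimately show ?thesis
    using assms(2) by (simp add: is_gon_def card_image)
qed

section \<open>Colorings and the chromatic number\<close>

definition no_monochromatic_edge :: "'v set set \<Rightarrow> ('v \<Rightarrow> 'c) \<Rightarrow> bool" where
  "no_monochromatic_edge E \<phi> \<longleftrightarrow> (\<forall>e\<in>E. \<exists>x\<in>e. \<exists>y\<in>e. \<phi> x \<noteq> \<phi> y)"

lemma proper_coloring_UNIV_iff:
  "proper_coloring UNIV E C \<phi> \<longleftrightarrow> range \<phi> \<subseteq> C \<and> no_monochromatic_edge E \<phi>"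
  unfolding proper_coloring_def no_monochromatic_edge_def by blast

lemma no_monochromatic_edge_comp:
  assumes "inj_on g (\<phi> ` \<Union>E)" "no_monochromatic_edge E \<phi>"
  shows "no_monochromatic_edge E (g \<circ> \<phi>)"
  unfolding no_monochromatic_edge_def
proof
  fix e assume "e \<in> E"
  then obtain x y where "x \<in> e" "y \<in> e" "\<phi> x \<noteq> \<phi> y"
    using assms(2) unfolding no_monochromatic_edge_def by blast
  then show "\<exists>x\<in>e. \<exists>y\<in>e. (g \<circ> \<phi>) x \<noteq> (g \<circ> \<phi>) y"
    using \<open>e \<in> E\<close> inj_onD[OF assms(1)] by (metis UnionI comp_apply imageI)
qed

definition colorable_on :: "'v set set \<Rightarrow> nat \<Rightarrow> 'v set \<Rightarrow> bool" where
  "colorable_on E n A \<longleftrightarrow>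
    (\<exists>\<theta>::'v \<Rightarrow> nat. (\<forall>x\<in>A. \<theta> x < n) \<and> no_monochromatic_edge {e\<in>E. e \<subseteq> A} \<theta>)"

lemma colorable_onI:
  fixes \<phi> :: "'v \<Rightarrow> 'c"
  assumes "finite (\<phi> ` A)" "card (\<phi> ` A) \<le> n" "no_monochromatic_edge {e\<in>E. e \<subseteq> A} \<phi>"
  shows "colorable_on E n A"
proof -
  obtain g :: "'c \<Rightarrow> nat" and k where g: "g ` \<phi> ` A = {i. i < k}" "inj_on g (\<phi> ` A)"
    using finite_imp_inj_to_nat_seg[OF assms(1)] by blast
  have "k = card (\<phi> ` A)"
    using card_image[OF g(2)] g(1) by simp
  moreover have "(g \<circ> \<phi>) x < k" if "x \<in> A" for x
    using that g(1) by (metis comp_apply imageI mem_Collect_eq)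
  ultimately have "\<forall>x\<in>A. (g \<circ> \<phi>) x < n"
    using assms(2) order_less_le_trans by blast
  moreover have "no_monochromatic_edge {e\<in>E. e \<subseteq> A} (g \<circ> \<phi>)"
    using assms(3) g(2) by (intro no_monochromatic_edge_comp) (auto intro: inj_on_subset)
  ultimately show ?thesis
    unfolding colorable_on_def by blast
qed

lemma monochromatic_edge_if_not_colorable_on:
  fixes \<psi> :: "'v \<Rightarrow> 'c"
  assumes "\<not> colorable_on E n A" "finite (\<psi> ` A)" "card (\<psi> ` A) \<le> n"
  shows "\<exists>Y. Y \<in> E \<and> Y \<subseteq> A \<and> (\<forall>x\<in>Y. \<forall>y\<in>Y. \<psi> x = \<psi> y)"
proof (rule ccontr)
  assume "\<not> ?thesis"
  then have "no_monochromatic_edge {e\<in>E. e \<subseteq> A} \<psi>"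
    unfolding no_monochromatic_edge_def by auto
  with assms(2,3) have "colorable_on E n A"
    by (rule colorable_onI)
  with assms(1) show False
    by blast
qed

lemma colorable_on_UNIV:
  "colorable_on E n UNIV \<longleftrightarrow> (\<exists>\<theta>::'v \<Rightarrow> nat. (\<forall>x. \<theta> x < n) \<and> no_monochromatic_edge E \<theta>)"
  unfolding colorable_on_def by simp

lemma colorable_on_image:
  fixes E :: "'v set set"
  assumes "\<forall>e\<in>E. g ` e \<in> E" "colorable_on E n (g ` A)"
  shows "colorable_on E n A"
proof -
  obtain \<theta> :: "'v \<Rightarrow> nat" where "\<forall>x\<in>g ` A. \<theta> x < n"
    and "no_monochromatic_edge {e\<in>E. e \<subseteq> g ` A} \<theta>"
    using assms(2) unfolding colorable_on_def by blast
  have "no_monochromatic_edge {e\<in>E. e \<subseteq> A} (\<theta> \<circ> g)"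
    unfolding no_monochromatic_edge_def
  proof
    fix e assume "e \<in> {e\<in>E. e \<subseteq> A}"
    then have "g ` e \<in> {e\<in>E. e \<subseteq> g ` A}"
      using assms(1) by blast
    with \<open>no_monochromatic_edge {e\<in>E. e \<subseteq> g ` A} \<theta>\<close>
    have "\<exists>x\<in>g ` e. \<exists>y\<in>g ` e. \<theta> x \<noteq> \<theta> y"
      unfolding no_monochromatic_edge_def by (rule bspec)
    then show "\<exists>x\<in>e. \<exists>y\<in>e. (\<theta> \<circ> g) x \<noteq> (\<theta> \<circ> g) y"
      by auto
  qed
  moreover have "\<forall>x\<in>A. (\<theta> \<circ> g) x < n"
    using \<open>\<forall>x\<in>g ` A. \<theta> x < n\<close> by simp
  ultimately show ?thesis
    unfolding colorable_on_def by (intro exI[of _ "\<theta> \<circ> g"] conjI)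
qed

definition finitely_colorable :: "'v set set \<Rightarrow> bool" where
  "finitely_colorable E \<longleftrightarrow> (\<exists>n. colorable_on E n UNIV)"

definition chromatic_number :: "'v set set \<Rightarrow> nat" where
  "chromatic_number E = (LEAST n. colorable_on E n UNIV)"

lemma colorable_on_chromatic_number:
  "finitely_colorable E \<Longrightarrow> colorable_on E (chromatic_number E) UNIV"
  unfolding finitely_colorable_def chromatic_number_def by (rule LeastI_ex)

lemma chromatic_number_le: "colorable_on E n UNIV \<Longrightarrow> chromatic_number E \<le> n"
  unfolding chromatic_number_def by (rule Least_le)

lemma two_le_chromatic_number:
  fixes E :: "'v set set"
  assumes "finitely_colorable E" "E \<noteq> {}"
  shows "2 \<le> chromatic_number E"
proof -
  obtain \<theta> :: "'v \<Rightarrow> nat" where \<theta>: "\<forall>x. \<theta> x < chromatic_number E" "no_monochromatic_edge E \<theta>"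
    using colorable_on_chromatic_number[OF assms(1)] unfolding colorable_on_UNIV by blast
  obtain x y where "\<theta> x \<noteq> \<theta> y"
    using assms(2) \<theta>(2) unfolding no_monochromatic_edge_def by blast
  then have "1 \<le> \<theta> x \<or> 1 \<le> \<theta> y"
    by auto
  then show ?thesis
    using \<theta>(1)[rule_format, of x] \<theta>(1)[rule_format, of y] by linarith
qed

lemma colorable_with_if_chromatic_number_le:
  fixes E :: "'v set set" and D :: "'c set"
  assumes "finitely_colorable E" "infinite D \<or> chromatic_number E \<le> card D"
  shows "colorable_with UNIV E D"
proof -
  let ?k = "chromatic_number E"
  obtain \<theta> :: "'v \<Rightarrow> nat" where \<theta>: "\<forall>x. \<theta> x < ?k" "no_monochromatic_edge E \<theta>"
    using colorable_on_chromatic_number[OF assms(1)] unfolding colorable_on_UNIV by blast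
  obtain B where B: "B \<subseteq> D" "finite B" "?k \<le> card B"
  proof (cases "finite D")
    case False
    then obtain B where "finite B" "card B = ?k" "B \<subseteq> D"
      using infinite_arbitrarily_large by blast
    then show thesis
      using that by simp
  qed (use assms(2) in auto)
  then obtain f where f: "f ` {..<?k} \<subseteq> D" "inj_on f {..<?k}"
    using card_le_inj[of "{..<?k}" B] by auto
  have "\<theta> ` \<Union>E \<subseteq> {..<?k}"
    using \<theta>(1) by auto
  then have "no_monochromatic_edge E (f \<circ> \<theta>)"
    using \<theta>(2) inj_on_subset[OF f(2)] by (intro no_monochromatic_edge_comp)
  moreover have "range (f \<circ> \<theta>) \<subseteq> D"
    using f(1) \<theta>(1) by (auto simp: image_subset_iff)
  ultimately show ?thesis
    unfolding colorable_with_def proper_coloring_UNIV_iff by blast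
qed

lemma has_chromatic_card_imp_card_le:
  assumes "infinite (UNIV :: 'v set)" "finitely_colorable (E :: 'v set set)"
    and "has_chromatic_card UNIV E C"
  shows "finite C" "card C \<le> chromatic_number E"
proof -
  obtain D :: "'v set" where D: "finite D" "card D = chromatic_number E"
    using infinite_arbitrarily_large[OF assms(1)] by blast
  then have "colorable_with UNIV E D"
    using colorable_with_if_chromatic_number_le[OF assms(2), of D] by simp
  then have "(card_of C, card_of D) \<in> ordLeq"
    using assms(3) unfolding has_chromatic_card_def by blast
  then show "finite C"
    using D(1) card_of_ordLeq_finite by blast
  obtain f where "inj_on f C" "f ` C \<subseteq> D"
    using \<open>(card_of C, card_of D) \<in> ordLeq\<close> card_of_ordLeq[of C D] by blast
  then show "card C \<le> chromatic_number E"
    using D card_inj_on_le by metis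
qed

lemma hg_equivalent_if_refines:
  fixes E1 E2 :: "'v set set"
  assumes "infinite (UNIV :: 'v set)" "finitely_colorable E1"
    and refines: "\<And>e. e \<in> E2 \<Longrightarrow> \<exists>e'\<in>E1. e' \<subseteq> e"
    and reflects: "\<And>\<phi> :: 'v \<Rightarrow> 'v. no_monochromatic_edge E2 \<phi> \<Longrightarrow> finite (range \<phi>)
      \<Longrightarrow> card (range \<phi>) \<le> chromatic_number E1 \<Longrightarrow> no_monochromatic_edge E1 \<phi>"
  shows "hg_equivalent UNIV E1 E2"
proof -
  have proper_12: "proper_coloring UNIV E2 C \<phi>" if "proper_coloring UNIV E1 C \<phi>" for C :: "'c set" and \<phi>
    using that refines unfolding proper_coloring_def by (meson subsetD)
  have proper_21: "proper_coloring UNIV E1 C \<phi>"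
    if "proper_coloring UNIV E2 C \<phi>" "finite C" "card C \<le> chromatic_number E1" for C and \<phi> :: "'v \<Rightarrow> 'v"
    using that reflects card_mono[of C "range \<phi>"] finite_subset[of "range \<phi>" C]
    unfolding proper_coloring_UNIV_iff by (meson order_trans)
  have colorable: "colorable_with UNIV E1 D \<longleftrightarrow> colorable_with UNIV E2 D" for D :: "'v set"
  proof (cases "finite D \<and> card D \<le> chromatic_number E1")
    case True
    then show ?thesis
      using proper_12 proper_21 unfolding colorable_with_def by blast
  next
    case False
    then have "colorable_with UNIV E1 D"
      by (intro colorable_with_if_chromatic_number_le[OF assms(2)]) auto
    then show ?thesis
      using proper_12 unfolding colorable_with_def by blast
  qed
  then have "has_chromatic_card UNIV E1 D \<longleftrightarrow> has_chromatic_card UNIV E2 D" for D :: "'v set"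
    unfolding has_chromatic_card_def by simp
  moreover have "proper_coloring UNIV E1 C \<phi> \<longleftrightarrow> proper_coloring UNIV E2 C \<phi>"
    if "has_chromatic_card UNIV E1 C" for C :: "'v set" and \<phi>
    using has_chromatic_card_imp_card_le[OF assms(1,2) that] proper_12 proper_21 by blast
  ultimately show ?thesis
    unfolding hg_equivalent_def by blast
qed

section \<open>Compactness\<close>

lemma closed_nonconstant_on:
  assumes "finite e"
  shows "closed {\<theta> :: 'v \<Rightarrow> 'a::discrete_topology. \<exists>x\<in>e. \<exists>y\<in>e. \<theta> x \<noteq> \<theta> y}"
proof -
  have "open {\<theta> :: 'v \<Rightarrow> 'a. \<theta> x = \<theta> y}" for x y
  proof -
    have "{\<theta> :: 'v \<Rightarrow> 'a. \<theta> x = \<theta> y} = (\<Union>a. (\<lambda>\<theta>. \<theta> x) -` {a} \<inter> (\<lambda>\<theta>. \<theta> y) -` {a})"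
      by auto
    moreover have "open ((\<lambda>\<theta> :: 'v \<Rightarrow> 'a. \<theta> z) -` {a})" for z a
      by (intro open_vimage open_discrete continuous_on_product_coordinates)
    ultimately show ?thesis
      by (simp add: open_UN open_Int)
  qed
  then have "open (\<Inter>x\<in>e. \<Inter>y\<in>e. {\<theta> :: 'v \<Rightarrow> 'a. \<theta> x = \<theta> y})"
    using assms by (simp add: open_INT)
  moreover have "{\<theta> :: 'v \<Rightarrow> 'a. \<exists>x\<in>e. \<exists>y\<in>e. \<theta> x \<noteq> \<theta> y} = - (\<Inter>x\<in>e. \<Inter>y\<in>e. {\<theta>. \<theta> x = \<theta> y})"
    by blast
  ultimately show ?thesis
    by (simp only:) (rule closed_Compl)
qed

lemma compact_bounded_functions: "compact (PiE UNIV (\<lambda>_. {..<n}) :: ('v \<Rightarrow> nat) set)"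
proof -
  have "compactin (product_topology (\<lambda>_. euclidean) UNIV) (PiE UNIV (\<lambda>_. {..<n}) :: ('v \<Rightarrow> nat) set)"
    by (subst compactin_PiE) (auto intro: finite_imp_compact)
  then show ?thesis
    by (simp add: euclidean_product_topology)
qed

lemma colorable_on_compactness:
  fixes E :: "'v set set"
  assumes finite_edges: "\<forall>e\<in>E. finite e" and "0 < n"
    and finite_parts: "\<And>A. finite A \<Longrightarrow> colorable_on E n A"
  shows "colorable_on E n UNIV"
proof -
  define K :: "('v \<Rightarrow> nat) set" where "K = PiE UNIV (\<lambda>_. {..<n})"
  define F where "F e = {\<theta>::'v \<Rightarrow> nat. \<exists>x\<in>e. \<exists>y\<in>e. \<theta> x \<noteq> \<theta> y}" for e
  have "K \<inter> \<Inter>(F ` E) \<noteq> {}"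
  proof (rule compact_imp_fip)
    show "compact K"
      unfolding K_def by (rule compact_bounded_functions)
    show "closed T" if "T \<in> F ` E" for T
      using that finite_edges closed_nonconstant_on unfolding F_def by blast
    fix \<F> assume \<F>: "finite \<F>" "\<F> \<subseteq> F ` E"
    then obtain E' where E': "E' \<subseteq> E" "finite E'" "\<F> = F ` E'"
      using finite_subset_image[OF \<F>] by blast
    then have "finite (\<Union>E')"
      using finite_edges by blast
    then obtain \<theta> :: "'v \<Rightarrow> nat" where \<theta>: "\<forall>x\<in>\<Union>E'. \<theta> x < n"
      "no_monochromatic_edge {e\<in>E. e \<subseteq> \<Union>E'} \<theta>"
      using finite_parts[OF \<open>finite (\<Union>E')\<close>] unfolding colorable_on_def by blast
    define \<theta>' where "\<theta>' x = (if x \<in> \<Union>E' then \<theta> x else 0)" for x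
    have "\<theta>' \<in> K"
      using \<theta>(1) \<open>0 < n\<close> by (auto simp: K_def \<theta>'_def PiE_iff)
    moreover have "\<theta>' \<in> F e" if "e \<in> E'" for e
    proof -
      have "e \<in> {e\<in>E. e \<subseteq> \<Union>E'}"
        using that E'(1) by blast
      with \<theta>(2) have "\<exists>x\<in>e. \<exists>y\<in>e. \<theta> x \<noteq> \<theta> y"
        unfolding no_monochromatic_edge_def by (rule bspec)
      moreover have "\<theta>' x = \<theta> x" if "x \<in> e" for x
        using that \<open>e \<in> E'\<close> by (auto simp: \<theta>'_def)
      ultimately show ?thesis
        unfolding F_def by auto
    qed
    ultimately show "K \<inter> \<Inter>\<F> \<noteq> {}"
      using E'(3) by blast
  qed
  then obtain \<theta> where "\<theta> \<in> K" "\<And>e. e \<in> E \<Longrightarrow> \<theta> \<in> F e"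
    by blast
  then have "\<forall>x. \<theta> x < n" "no_monochromatic_edge E \<theta>"
    unfolding K_def F_def no_monochromatic_edge_def by auto
  then show ?thesis
    unfolding colorable_on_UNIV by blast
qed

lemma exists_finite_not_colorable_on:
  assumes "\<forall>e\<in>E. finite e" "finitely_colorable E" "E \<noteq> {}"
  obtains A where "finite A" "\<not> colorable_on E (chromatic_number E - 1) A"
proof -
  let ?k = "chromatic_number E"
  have "2 \<le> ?k"
    using two_le_chromatic_number[OF assms(2,3)] .
  have "\<not> colorable_on E (?k - 1) UNIV"
  proof
    assume "colorable_on E (?k - 1) UNIV"
    then have "?k \<le> ?k - 1"
      by (rule chromatic_number_le)
    then show False
      using \<open>2 \<le> ?k\<close> by linarith
  qed
  moreover have "0 < ?k - 1"
    using \<open>2 \<le> ?k\<close> by linarith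
  ultimately have "\<not> (\<forall>A. finite A \<longrightarrow> colorable_on E (?k - 1) A)"
    using colorable_on_compactness[OF assms(1)] by blast
  then show thesis
    using that by blast
qed

section \<open>Finite colorings avoiding distances\<close>

lemma norm_diff_lt_if_same_cell:
  fixes x y :: "'a::euclidean_space" and h :: real
  assumes "0 < h" "\<forall>b\<in>Basis. \<lfloor>(x \<bullet> b) / h\<rfloor> = \<lfloor>(y \<bullet> b) / h\<rfloor>"
  shows "norm (x - y) < real DIM('a) * h"
proof -
  have "\<bar>u - v\<bar> < 1" if "\<lfloor>u\<rfloor> = \<lfloor>v\<rfloor>" for u v :: real
    using that by linarith
  then have "\<bar>(x \<bullet> b) / h - (y \<bullet> b) / h\<bar> < 1" if "b \<in> Basis" for b
    using assms(2) that by blast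
  then have "\<bar>(x - y) \<bullet> b\<bar> < h" if "b \<in> Basis" for b
    using that \<open>0 < h\<close> by (simp add: inner_diff_left diff_divide_distrib[symmetric])
  then have "(\<Sum>b\<in>Basis. \<bar>(x - y) \<bullet> b\<bar>) < (\<Sum>b\<in>(Basis::'a set). h)"
    by (intro sum_strict_mono) auto
  then show ?thesis
    using norm_le_l1[of "x - y"] by simp
qed

lemma norm_diff_gt_if_same_residue:
  fixes x y :: "'a::euclidean_space" and h :: real and K :: int
  assumes "0 < h" "0 < K" "b \<in> Basis"
    and "\<lfloor>(x \<bullet> b) / h\<rfloor> \<noteq> \<lfloor>(y \<bullet> b) / h\<rfloor>" "\<lfloor>(x \<bullet> b) / h\<rfloor> mod K = \<lfloor>(y \<bullet> b) / h\<rfloor> mod K"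
  shows "(K - 1) * h < norm (x - y)"
proof -
  let ?d = "\<lfloor>(x \<bullet> b) / h\<rfloor> - \<lfloor>(y \<bullet> b) / h\<rfloor>"
  have "K dvd ?d"
    using assms(5) by (simp add: mod_eq_dvd_iff)
  then have "K \<le> \<bar>?d\<bar>"
    using assms(2,4) dvd_imp_le_int[of ?d K] by simp
  then have "K - 1 < \<bar>(x \<bullet> b) / h - (y \<bullet> b) / h\<bar>"
    by linarith
  also have "\<dots> = \<bar>(x - y) \<bullet> b\<bar> / h"
    using \<open>0 < h\<close> by (simp add: inner_diff_left diff_divide_distrib[symmetric])
  finally have "(K - 1) * h < \<bar>(x - y) \<bullet> b\<bar>"
    using \<open>0 < h\<close> by (simp add: pos_less_divide_eq)
  then show ?thesis
    using Basis_le_norm[OF assms(3), of "x - y"] by linarith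
qed

lemma grid_coloring:
  fixes r R :: real
  assumes "0 < r"
  obtains \<phi> :: "'a::euclidean_space \<Rightarrow> 'a \<Rightarrow> int"
  where "finite (range \<phi>)" "\<And>x y. r \<le> norm (x - y) \<Longrightarrow> norm (x - y) \<le> R \<Longrightarrow> \<phi> x \<noteq> \<phi> y"
proof
  \<comment> \<open>Color by grid cell of side \<open>h\<close> modulo \<open>K\<close>: a cell has diameter below \<open>r\<close>, and
    distinct cells of the same color are more than \<open>R\<close> apart.\<close>
  define h where "h = r / DIM('a)"
  define K :: int where "K = \<lceil>\<bar>R\<bar> / h\<rceil> + 1"
  have "0 < h"
    using assms by (simp add: h_def)
  then have "0 \<le> \<bar>R\<bar> / h"
    by simp
  then have "0 < K"
    unfolding K_def by linarith
  have "\<bar>R\<bar> / h \<le> K - 1"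
    by (simp add: K_def)
  then have "\<bar>R\<bar> \<le> (K - 1) * h"
    using \<open>0 < h\<close> by (simp add: pos_divide_le_eq)
  define \<phi> where "\<phi> x = (\<lambda>b\<in>Basis. \<lfloor>(x \<bullet> b) / h\<rfloor> mod K)" for x :: 'a
  have "range \<phi> \<subseteq> PiE Basis (\<lambda>_. {0..<K})"
    using \<open>0 < K\<close> by (auto simp: \<phi>_def restrict_PiE_iff)
  then show "finite (range \<phi>)"
    by (rule finite_subset) (simp add: finite_PiE)
  fix x y :: 'a
  assume "r \<le> norm (x - y)" "norm (x - y) \<le> R"
  show "\<phi> x \<noteq> \<phi> y"
  proof
    assume "\<phi> x = \<phi> y"
    have same_residue: "\<lfloor>(x \<bullet> b) / h\<rfloor> mod K = \<lfloor>(y \<bullet> b) / h\<rfloor> mod K" if "b \<in> Basis" for b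
      using that fun_cong[OF \<open>\<phi> x = \<phi> y\<close>, of b] by (simp add: \<phi>_def)
    show False
    proof (cases "\<forall>b\<in>Basis. \<lfloor>(x \<bullet> b) / h\<rfloor> = \<lfloor>(y \<bullet> b) / h\<rfloor>")
      case True
      have "real DIM('a) * h = r"
        by (simp add: h_def)
      then show False
        using norm_diff_lt_if_same_cell[OF \<open>0 < h\<close> True] \<open>r \<le> norm (x - y)\<close> by simp
    next
      case False
      then obtain b where "b \<in> Basis" "\<lfloor>(x \<bullet> b) / h\<rfloor> \<noteq> \<lfloor>(y \<bullet> b) / h\<rfloor>"
        by blast
      then show False
        using norm_diff_gt_if_same_residue[OF \<open>0 < h\<close> \<open>0 < K\<close>] same_residue
          \<open>norm (x - y) \<le> R\<close> \<open>\<bar>R\<bar> \<le> (K - 1) * h\<close> by fastforce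
    qed
  qed
qed

lemma is_norm_distance_coloring:
  fixes N :: "'a::euclidean_space \<Rightarrow> real"
  assumes "is_norm N" "finite \<Delta>" "\<forall>\<delta>\<in>\<Delta>. 0 < \<delta>"
  obtains \<phi> :: "'a \<Rightarrow> 'a \<Rightarrow> int"
  where "finite (range \<phi>)" "\<And>x y. N (x - y) \<in> \<Delta> \<Longrightarrow> \<phi> x \<noteq> \<phi> y"
proof (cases "\<Delta> = {}")
  case False
  obtain B where "0 < B" and B: "\<And>x. N x \<le> B * norm x"
    using is_norm_le_norm[OF assms(1)] by blast
  obtain c where "0 < c" and c: "\<And>x. c * norm x \<le> N x"
    using is_norm_ge_norm[OF assms(1)] by blast
  have "0 < Min \<Delta> / B"
    using assms(2,3) False \<open>0 < B\<close> by simp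
  then obtain \<phi> :: "'a \<Rightarrow> 'a \<Rightarrow> int" where "finite (range \<phi>)"
    and \<phi>: "\<And>x y. Min \<Delta> / B \<le> norm (x - y) \<Longrightarrow> norm (x - y) \<le> Max \<Delta> / c \<Longrightarrow> \<phi> x \<noteq> \<phi> y"
    using grid_coloring by blast
  show ?thesis
  proof (rule that[OF \<open>finite (range \<phi>)\<close>])
    fix x y assume "N (x - y) \<in> \<Delta>"
    then have "Min \<Delta> \<le> B * norm (x - y)" "c * norm (x - y) \<le> Max \<Delta>"
      using assms(2) B[of "x - y"] c[of "x - y"] by (meson Min_le Max_ge order_trans)+
    then show "\<phi> x \<noteq> \<phi> y"
      using \<phi> \<open>0 < B\<close> \<open>0 < c\<close> by (simp add: pos_divide_le_eq pos_le_divide_eq mult.commute)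
  qed
qed (rule that[of "\<lambda>_ _. 0"]; simp)

lemma finitely_colorable_cong_edges:
  fixes N :: "'a::euclidean_space \<Rightarrow> real"
  assumes "is_norm N" "finite M" "\<forall>T\<in>M. \<exists>x\<in>T. \<exists>y\<in>T. x \<noteq> y"
  shows "finitely_colorable (cong_edges N M)"
proof -
  obtain a b where ab: "\<And>T. T \<in> M \<Longrightarrow> a T \<in> T \<and> b T \<in> T \<and> a T \<noteq> b T"
    using assms(3) by metis
  let ?\<Delta> = "(\<lambda>T. N (a T - b T)) ` M"
  have "finite ?\<Delta>" "\<forall>\<delta>\<in>?\<Delta>. 0 < \<delta>"
    using assms(2) ab is_norm_pos[OF assms(1)] by auto
  then obtain \<phi> :: "'a \<Rightarrow> 'a \<Rightarrow> int"
    where \<phi>: "finite (range \<phi>)" "\<And>x y. N (x - y) \<in> ?\<Delta> \<Longrightarrow> \<phi> x \<noteq> \<phi> y"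
    using is_norm_distance_coloring[OF assms(1)] by blast
  have "no_monochromatic_edge (cong_edges N M) \<phi>"
    unfolding no_monochromatic_edge_def
  proof
    fix X assume "X \<in> cong_edges N M"
    then obtain T f where "T \<in> M" "affine_isometry N f" "X = f ` T"
      by (auto simp: cong_edges_iff[OF assms(1)])
    then have "f (a T) \<in> X" "f (b T) \<in> X" "N (f (a T) - f (b T)) \<in> ?\<Delta>"
      using ab[of T] affine_isometry_diff[of N f "a T" "b T"] by auto
    then show "\<exists>x\<in>X. \<exists>y\<in>X. \<phi> x \<noteq> \<phi> y"
      using \<phi>(2) by blast
  qed
  then show ?thesis
    unfolding finitely_colorable_def using colorable_onI[of \<phi> UNIV] \<phi>(1) by auto
qed

lemma infinite_UNIV_euclidean: "infinite (UNIV :: 'a::euclidean_space set)"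
proof
  assume "finite (UNIV :: 'a set)"
  obtain b :: 'a where "b \<in> Basis"
    using nonempty_Basis by blast
  then have "inj (\<lambda>r::real. r *\<^sub>R b)"
    by (auto intro: injI simp: nonzero_Basis)
  then show False
    using \<open>finite UNIV\<close> infinite_UNIV_char_0 finite_imageD finite_subset by (metis subset_UNIV)
qed

lemma exists_translate_avoiding:
  fixes A F :: "'a::ab_group_add set"
  assumes "infinite (UNIV :: 'a set)" "finite A" "finite F"
  obtains v where "(\<lambda>x. x + v) ` A \<inter> F = {}"
proof -
  obtain v where v: "v \<notin> (\<lambda>(f, a). f - a) ` (F \<times> A)"
    using ex_new_if_finite[OF assms(1)] assms(2,3) by (metis finite_SigmaI finite_imageI)
  have "(\<lambda>x. x + v) ` A \<inter> F = {}"
  proof (rule ccontr)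
    assume "(\<lambda>x. x + v) ` A \<inter> F \<noteq> {}"
    then obtain a where "a \<in> A" "a + v \<in> F"
      by blast
    then have "v \<in> (\<lambda>(f, a). f - a) ` (F \<times> A)"
      by (intro image_eqI[of _ _ "(a + v, a)"]) auto
    then show False
      using v by blast
  qed
  then show thesis
    by (rule that)
qed

lemma exists_disjoint_translates:
  fixes A U :: "'a::ab_group_add set" and n :: nat
  assumes "infinite (UNIV :: 'a set)" "finite A" "finite U"
  shows "\<exists>v. disjoint_family_on (\<lambda>i. (\<lambda>x. x + v i) ` A) {..<n}
    \<and> (\<forall>i<n. (\<lambda>x. x + v i) ` A \<inter> U = {})"
proof (induction n)
  case (Suc n)
  then obtain v where v: "disjoint_family_on (\<lambda>i. (\<lambda>x. x + v i) ` A) {..<n}"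
    "\<forall>i<n. (\<lambda>x. x + v i) ` A \<inter> U = {}"
    by blast
  obtain w where w: "(\<lambda>x. x + w) ` A \<inter> (U \<union> (\<Union>i<n. (\<lambda>x. x + v i) ` A)) = {}"
    using exists_translate_avoiding[OF assms(1,2)] assms(2,3) by (metis finite_UN finite_Un finite_imageI finite_lessThan)
  let ?v = "v(n := w)"
  have v_eq: "(\<lambda>x. x + ?v i) ` A = (\<lambda>x. x + v i) ` A" if "i < n" for i
    using that by simp
  then have "disjoint_family_on (\<lambda>i. (\<lambda>x. x + ?v i) ` A) {..<n}"
    using v(1) unfolding disjoint_family_on_def by simp
  moreover have "(\<lambda>x. x + ?v n) ` A \<inter> (\<Union>i\<in>{..<n}. (\<lambda>x. x + ?v i) ` A) = {}"
    using w v_eq by (simp add: Int_Un_distrib)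
  ultimately have "disjoint_family_on (\<lambda>i. (\<lambda>x. x + ?v i) ` A) {..<Suc n}"
    by (simp add: lessThan_Suc disjoint_family_on_insert)
  moreover have "\<forall>i<Suc n. (\<lambda>x. x + ?v i) ` A \<inter> U = {}"
    using v(2) w v_eq by (auto simp: less_Suc_eq)
  ultimately show ?case
    by blast
qed (simp add: disjoint_family_on_def)

section \<open>Counting colors of isolated edges\<close>

lemma card_le_card_image_if_isolated:
  fixes \<psi> :: "'v \<Rightarrow> 'c" and Y :: "'i \<Rightarrow> 'v set"
  assumes "finite G"
    and isolated: "\<And>Y q. Y \<in> E \<Longrightarrow> Y \<subseteq> G \<Longrightarrow> q \<in> G \<Longrightarrow> \<forall>y\<in>Y. \<psi> y = \<psi> q \<Longrightarrow> q \<in> Y"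
    and Y: "\<forall>i\<in>I. Y i \<in> E \<and> Y i \<subseteq> G \<and> Y i \<noteq> {} \<and> (\<forall>x\<in>Y i. \<forall>y\<in>Y i. \<psi> x = \<psi> y)"
    and "disjoint_family_on Y I"
  shows "card I \<le> card (\<psi> ` G)"
proof -
  have "\<forall>i\<in>I. \<exists>y. y \<in> Y i"
    using Y by blast
  then obtain y where y: "\<forall>i\<in>I. y i \<in> Y i"
    by (rule bchoice[THEN exE])
  have "inj_on (\<psi> \<circ> y) I"
  proof (rule inj_onI)
    fix i j assume i: "i \<in> I" and j: "j \<in> I" and same: "(\<psi> \<circ> y) i = (\<psi> \<circ> y) j"
    have "\<forall>x\<in>Y j. \<psi> x = \<psi> (y j)"
      using Y y j by blast
    with same have "\<forall>x\<in>Y j. \<psi> x = \<psi> (y i)"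
      by simp
    moreover have "Y j \<in> E" "Y j \<subseteq> G" "y i \<in> G"
      using Y y i j by blast+
    ultimately have "y i \<in> Y j"
      using isolated by blast
    then have "Y i \<inter> Y j \<noteq> {}"
      using y i by blast
    then show "i = j"
      using assms(4) i j unfolding disjoint_family_on_def by blast
  qed
  moreover have "y ` I \<subseteq> G"
    using Y y by blast
  then have "(\<psi> \<circ> y) ` I \<subseteq> \<psi> ` G"
    by (metis image_comp image_mono)
  ultimately show ?thesis
    using card_inj_on_le[of "\<psi> \<circ> y" I "\<psi> ` G"] \<open>finite G\<close> by simp
qed

lemma card_image_gt_if_isolated_edges:
  fixes \<psi> :: "'v \<Rightarrow> 'c" and B :: "nat \<Rightarrow> 'v set"
  assumes "finite G" "{} \<notin> E"
    and isolated: "\<And>Y q. Y \<in> E \<Longrightarrow> Y \<subseteq> G \<Longrightarrow> q \<in> G \<Longrightarrow> \<forall>y\<in>Y. \<psi> y = \<psi> q \<Longrightarrow> q \<in> Y"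
    and T: "T \<in> E" "T \<subseteq> G" "\<forall>x\<in>T. \<forall>y\<in>T. \<psi> x = \<psi> y"
    and B: "disjoint_family_on B {..<k}" "\<forall>j<k. B j \<subseteq> G - T"
      "\<forall>j<k. \<not> colorable_on E (k - 1) (B j)"
  shows "k < card (\<psi> ` G)"
proof -
  obtain t where "t \<in> T"
    using T(1) \<open>{} \<notin> E\<close> by fastforce
  have "\<psi> q \<noteq> \<psi> t" if "q \<in> G - T" for q
  proof
    assume "\<psi> q = \<psi> t"
    then have "\<forall>y\<in>T. \<psi> y = \<psi> q"
      using T(3) \<open>t \<in> T\<close> by metis
    then show False
      using isolated[OF T(1,2)] that by blast
  qed
  then have "\<psi> ` (G - T) \<subseteq> \<psi> ` G - {\<psi> t}"
    by fastforce
  moreover have "\<psi> t \<in> \<psi> ` G"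
    using \<open>t \<in> T\<close> T(2) by blast
  ultimately have fewer: "card (\<psi> ` (G - T)) < card (\<psi> ` G)"
    using \<open>finite G\<close> by (meson card_Diff1_less card_mono finite_Diff finite_imageI order_le_less_trans)
  show ?thesis
  proof (rule ccontr)
    assume "\<not> k < card (\<psi> ` G)"
    \<comment> \<open>Then each block sees fewer than \<open>k\<close> colors, so it contains a monochromatic edge;
      these \<open>k\<close> edges have pairwise distinct colors, all different from that of \<open>T\<close>.\<close>
    have "\<exists>Y. Y \<in> E \<and> Y \<subseteq> B j \<and> (\<forall>x\<in>Y. \<forall>y\<in>Y. \<psi> x = \<psi> y)" if "j < k" for j
    proof (rule monochromatic_edge_if_not_colorable_on)
      show "\<not> colorable_on E (k - 1) (B j)" "finite (\<psi> ` B j)"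
        using B(2,3) \<open>finite G\<close> that by (auto intro: finite_subset)
      have "card (\<psi> ` B j) \<le> card (\<psi> ` (G - T))"
        using B(2) \<open>finite G\<close> that by (intro card_mono) auto
      then show "card (\<psi> ` B j) \<le> k - 1"
        using fewer \<open>\<not> k < card (\<psi> ` G)\<close> by linarith
    qed
    then have "\<forall>j\<in>{..<k}. \<exists>Y. Y \<in> E \<and> Y \<subseteq> B j \<and> (\<forall>x\<in>Y. \<forall>y\<in>Y. \<psi> x = \<psi> y)"
      by simp
    then obtain Y where Y: "\<forall>j\<in>{..<k}. Y j \<in> E \<and> Y j \<subseteq> B j \<and> (\<forall>x\<in>Y j. \<forall>y\<in>Y j. \<psi> x = \<psi> y)"
      by (rule bchoice[THEN exE])
    have "card {..<k} \<le> card (\<psi> ` (G - T))"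
    proof (rule card_le_card_image_if_isolated)
      show "\<forall>j\<in>{..<k}. Y j \<in> E \<and> Y j \<subseteq> G - T \<and> Y j \<noteq> {} \<and> (\<forall>x\<in>Y j. \<forall>y\<in>Y j. \<psi> x = \<psi> y)"
      proof
        fix j assume "j \<in> {..<k}"
        with Y have Yj: "Y j \<in> E \<and> Y j \<subseteq> B j \<and> (\<forall>x\<in>Y j. \<forall>y\<in>Y j. \<psi> x = \<psi> y)"
          by (rule bspec)
        moreover have "B j \<subseteq> G - T"
          using B(2) \<open>j \<in> {..<k}\<close> by simp
        ultimately have "Y j \<subseteq> G - T" "Y j \<noteq> {}"
          using \<open>{} \<notin> E\<close> by (metis subset_trans, metis)
        with Yj show "Y j \<in> E \<and> Y j \<subseteq> G - T \<and> Y j \<noteq> {} \<and> (\<forall>x\<in>Y j. \<forall>y\<in>Y j. \<psi> x = \<psi> y)"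
          by (meson conjE conjI)
      qed
      show "disjoint_family_on Y {..<k}"
        using B(1)
      proof (rule disjoint_family_on_bisimulation)
        show "Y i \<inter> Y j = {}" if "i \<in> {..<k}" "j \<in> {..<k}" "B i \<inter> B j = {}" for i j
          using that Y by blast
      qed
      show "q \<in> Y" if "Y \<in> E" "Y \<subseteq> G - T" "q \<in> G - T" "\<forall>y\<in>Y. \<psi> y = \<psi> q" for Y q
        using isolated[of Y q] that by blast
    qed (use \<open>finite G\<close> in simp)
    then show False
      using fewer \<open>\<not> k < card (\<psi> ` G)\<close> by simp
  qed
qed

section \<open>One-point extensions\<close>

definition one_point_extensions :: "'v set \<Rightarrow> 'v set set \<Rightarrow> 'v set set" where
  "one_point_extensions G E = {insert q Y | Y q. Y \<in> E \<and> Y \<subseteq> G \<and> q \<in> G - Y}"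

lemma finite_one_point_extensions: "finite G \<Longrightarrow> finite (one_point_extensions G E)"
  by (rule finite_subset[of _ "Pow G"]) (auto simp: one_point_extensions_def)

lemma is_gon_one_point_extensions:
  "\<forall>Y\<in>E. is_gon m Y \<Longrightarrow> X \<in> one_point_extensions G E \<Longrightarrow> is_gon (m + 1) X"
  by (auto simp: one_point_extensions_def is_gon_def)

lemma cong_edges_one_point_extensions_refine:
  assumes "is_norm N" "X \<in> cong_edges N (one_point_extensions G (cong_edges N M))"
  shows "\<exists>Y\<in>cong_edges N M. Y \<subseteq> X"
proof -
  obtain Z f where "Z \<in> one_point_extensions G (cong_edges N M)" "affine_isometry N f" "X = f ` Z"
    using assms by (auto simp: cong_edges_iff)
  moreover from this obtain Y where "Y \<in> cong_edges N M" "Y \<subseteq> Z"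
    unfolding one_point_extensions_def by blast
  ultimately show ?thesis
    using image_in_cong_edges[OF assms(1)] by blast
qed

lemma mem_edge_if_same_color:
  fixes N :: "'a::real_vector \<Rightarrow> real" and \<phi> :: "'a \<Rightarrow> 'c"
  assumes "is_norm N" "affine_isometry N g"
    and "no_monochromatic_edge (cong_edges N (one_point_extensions G E)) \<phi>"
    and "Y \<in> E" "Y \<subseteq> G" "q \<in> G" "\<forall>y\<in>Y. (\<phi> \<circ> g) y = (\<phi> \<circ> g) q"
  shows "q \<in> Y"
proof (rule ccontr)
  assume "q \<notin> Y"
  then have "insert q Y \<in> one_point_extensions G E"
    using assms(4-6) unfolding one_point_extensions_def by blast
  then have "g ` insert q Y \<in> cong_edges N (one_point_extensions G E)"
    using assms(2) unfolding cong_edges_iff[OF assms(1)] by blast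
  with assms(3) have "\<exists>x\<in>g ` insert q Y. \<exists>y\<in>g ` insert q Y. \<phi> x \<noteq> \<phi> y"
    unfolding no_monochromatic_edge_def by (rule bspec)
  then show False
    using assms(7) by auto
qed

lemma no_monochromatic_edge_if_extensions_colored:
  fixes N :: "'a::real_vector \<Rightarrow> real" and \<phi> :: "'a \<Rightarrow> 'c" and B :: "nat \<Rightarrow> 'a set"
  assumes "is_norm N" "finite G" "\<Union>M \<subseteq> G" "{} \<notin> cong_edges N M"
    and B: "disjoint_family_on B {..<k}" "\<forall>j<k. B j \<subseteq> G - \<Union>M"
      "\<forall>j<k. \<not> colorable_on (cong_edges N M) (k - 1) (B j)"
    and \<phi>: "no_monochromatic_edge (cong_edges N (one_point_extensions G (cong_edges N M))) \<phi>"
      "finite (range \<phi>)" "card (range \<phi>) \<le> k"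
  shows "no_monochromatic_edge (cong_edges N M) \<phi>"
proof (rule ccontr)
  assume "\<not> no_monochromatic_edge (cong_edges N M) \<phi>"
  then obtain X where "X \<in> cong_edges N M" and X: "\<forall>x\<in>X. \<forall>y\<in>X. \<phi> x = \<phi> y"
    unfolding no_monochromatic_edge_def by blast
  then obtain T g where T: "T \<in> M" "affine_isometry N g" "X = g ` T"
    by (auto simp: cong_edges_iff[OF assms(1)])
  have "k < card ((\<phi> \<circ> g) ` G)"
  proof (rule card_image_gt_if_isolated_edges[OF assms(2,4)])
    show "q \<in> Y" if "Y \<in> cong_edges N M" "Y \<subseteq> G" "q \<in> G" "\<forall>y\<in>Y. (\<phi> \<circ> g) y = (\<phi> \<circ> g) q" for Y q
      using mem_edge_if_same_color[OF assms(1) T(2) \<phi>(1)] that by blast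
    show "T \<in> cong_edges N M" "T \<subseteq> G"
      using subset_cong_edges[OF assms(1)] T(1) assms(3) by blast+
    show "\<forall>x\<in>T. \<forall>y\<in>T. (\<phi> \<circ> g) x = (\<phi> \<circ> g) y"
      using X unfolding T(3) comp_def by blast
    show "\<forall>j<k. B j \<subseteq> G - T"
      using B(2) T(1) by blast
  qed (use B in auto)
  moreover have "card ((\<phi> \<circ> g) ` G) \<le> card (range \<phi>)"
    by (rule card_mono[OF \<phi>(2)]) auto
  ultimately show False
    using \<phi>(3) by linarith
qed

lemma exists_extension_reflecting_colorings:
  fixes N :: "'a::real_vector \<Rightarrow> real" and M :: "'a set set"
  assumes "is_norm N" "infinite (UNIV :: 'a set)" "finite M" "M \<noteq> {}" "\<forall>T\<in>M. is_gon m T"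
    and "finitely_colorable (cong_edges N M)"
  obtains G where "finite G"
    "\<And>\<phi> :: 'a \<Rightarrow> 'c. no_monochromatic_edge (cong_edges N (one_point_extensions G (cong_edges N M))) \<phi>
      \<Longrightarrow> finite (range \<phi>) \<Longrightarrow> card (range \<phi>) \<le> chromatic_number (cong_edges N M)
      \<Longrightarrow> no_monochromatic_edge (cong_edges N M) \<phi>"
proof -
  let ?E = "cong_edges N M"
  let ?k = "chromatic_number ?E"
  have "\<forall>e\<in>?E. finite e"
    using is_gon_cong_edges[OF assms(1,5)] by (auto simp: is_gon_def)
  moreover have "?E \<noteq> {}"
    using subset_cong_edges[OF assms(1)] assms(4) by blast
  ultimately obtain A where A: "finite A" "\<not> colorable_on ?E (?k - 1) A"
    using exists_finite_not_colorable_on[OF _ assms(6)] by blast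
  have "finite (\<Union>M)"
    using assms(3,5) by (auto simp: is_gon_def)
  then obtain v where v: "disjoint_family_on (\<lambda>j. (\<lambda>x. x + v j) ` A) {..<?k}"
    "\<forall>j<?k. (\<lambda>x. x + v j) ` A \<inter> \<Union>M = {}"
    using exists_disjoint_translates[OF assms(2) A(1)] by blast
  define B where "B j = (\<lambda>x. x + v j) ` A" for j
  define G where "G = \<Union>M \<union> (\<Union>j<?k. B j)"
  have "finite G"
    unfolding G_def B_def using A(1) \<open>finite (\<Union>M)\<close> by simp
  have "\<not> colorable_on ?E (?k - 1) (B j)" for j
    unfolding B_def using A(2) colorable_on_image[of ?E "\<lambda>x. x + v j"]
      image_in_cong_edges[OF assms(1) affine_isometry_translation] by blast
  moreover have "{} \<notin> ?E"
  proof
    assume "{} \<in> ?E"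
    obtain \<theta> :: "'a \<Rightarrow> nat" where "no_monochromatic_edge ?E \<theta>"
      using assms(6) unfolding finitely_colorable_def colorable_on_UNIV by blast
    with \<open>{} \<in> ?E\<close> show False
      unfolding no_monochromatic_edge_def by blast
  qed
  ultimately show thesis
    using that[OF \<open>finite G\<close>] no_monochromatic_edge_if_extensions_colored[OF assms(1) \<open>finite G\<close>]
      v(1) v(2) unfolding G_def B_def by blast
qed

lemma is_gon_ex_two_points: "is_gon m T \<Longrightarrow> 2 \<le> m \<Longrightarrow> \<exists>x\<in>T. \<exists>y\<in>T. x \<noteq> y"
  unfolding is_gon_def using card_le_Suc0_iff_eq[of T] by auto

theorem theorem4p3:
  fixes N :: "real ^ 'd \<Rightarrow> real" and m :: nat and M :: "(real ^ 'd) set set"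
  assumes "is_norm N" and "m \<ge> 2"
    and "finite M" and "M \<noteq> {}" and "\<forall>T\<in>M. is_gon m T"
  shows "\<exists>S :: (real ^ 'd) set set. finite S \<and> (\<forall>T\<in>S. is_gon (m + 1) T) \<and>
           hg_equivalent UNIV (cong_edges N M) (cong_edges N S)"
proof -
  let ?E = "cong_edges N M"
  have colorable: "finitely_colorable ?E"
    using finitely_colorable_cong_edges[OF assms(1,3)] is_gon_ex_two_points assms(2,5) by blast
  obtain G where "finite G" and reflects:
    "\<And>\<phi> :: real ^ 'd \<Rightarrow> real ^ 'd. no_monochromatic_edge (cong_edges N (one_point_extensions G ?E)) \<phi>
      \<Longrightarrow> finite (range \<phi>) \<Longrightarrow> card (range \<phi>) \<le> chromatic_number ?E \<Longrightarrow> no_monochromatic_edge ?E \<phi>"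
    using exists_extension_reflecting_colorings[OF assms(1) infinite_UNIV_euclidean assms(3-5) colorable]
    by blast
  let ?S = "one_point_extensions G ?E"
  have "hg_equivalent UNIV ?E (cong_edges N ?S)"
    using infinite_UNIV_euclidean colorable cong_edges_one_point_extensions_refine[OF assms(1)] reflects
    by (rule hg_equivalent_if_refines)
  moreover have "finite ?S" "\<forall>T\<in>?S. is_gon (m + 1) T"
    using finite_one_point_extensions[OF \<open>finite G\<close>]
      is_gon_one_point_extensions is_gon_cong_edges[OF assms(1,5)] by blast+
  ultimately show ?thesis
    by blast
qed

end
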